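(* Let $R$ be a finite local commutative ring, $K\le R^\times$, $\mathcal C=\mathrm{Cyc}(K,R)$ and $\mathcal A=\mathcal A(K,R)$ its multiplication S-ring; let $u=0$, $v=1$. If the S-ring $\mathcal A$ is trivial, then the scheme $\mathcal C_{u,v}$ is trivial. In particular, in this case $\mathrm{Aut}(\mathcal C)=\Gamma(K,R)$.
   Context: All rings have an identity. A scheme on a finite set $V$ is a pair $(V,\mathcal R)$, $\mathcal R$ a partition of $V\times V$ into nonempty basis relations, closed under transposition, with the diagonal a union of basis relations and with the intersection numbers $|\{y:(x,y)\in R_1,(y,z)\in R_2\}|$ depending only on the basis relation containing $(x,z)$; relations are unions of basis relations. A scheme is trivial if every subset of $V\times V$ is a relation (all basis relations are singletons). $\mathrm{Aut}$ is the group of permutations fixing every basis relation; $\mathrm{Iso}$ the group of permutations permuting them. $[\mathcal C,\mathcal M]$ is the smallest scheme having all relations of $\mathcal C$ and of the set $\mathcal M$ as relations; $\mathcal C_w=[\mathcal C,\{(w,w)\}]$, $\mathcal C_{u,v}=[\mathcal C,\{(u,u)\},\{(v,v)\}]$. If $\Delta(U)$ is a relation, $\mathcal C_U$ is the scheme on $U$ with basis relations the nonempty $S\cap U^2$. For $\Gamma\le\mathrm{Iso}(\mathcal C)$, $\mathcal C^\Gamma$ is the scheme whose relations are the $\Gamma$-invariant relations of $\mathcal C$. $\mathrm{Cyc}(K,R)$ is the scheme on $R$ with basis relations $\{(x,y): y-x\in rK\}$, $r\in R$. With $u=0$, $\mathcal C'=((\mathcal C_u)_{R^\times})^{R^\times_{right}}$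 where $R^\times_{right}=\{x\mapsto xa:a\in R^\times\}$; its basis relations are $\{(g,xg):g\in R^\times,x\in X\}$ for sets $X$ partitioning $R^\times$. The multiplication S-ring $\mathcal A(K,R)$ is the S-ring over $R^\times$ with these basic sets $X$; it is trivial if all basic sets are singletons. $\Gamma(K,R)$ is the group of permutations $x\mapsto ax+b$, $a\in K$, $b\in R$. *)

theory Defs
  imports Main
begin

definition is_ideal :: "'a::comm_ring_1 set \<Rightarrow> bool" where
  "is_ideal I \<longleftrightarrow> 0 \<in> I \<and> (\<forall>x\<in>I. \<forall>y\<in>I. x + y \<in> I) \<and> (\<forall>x\<in>I. \<forall>r. r * x \<in> I)"

definition maximal_ideal :: "'a::comm_ring_1 set \<Rightarrow> bool" where
  "maximal_ideal I \<longleftrightarrow> is_ideal I \<and> 1 \<notin> I \<and>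
     (\<forall>J. is_ideal J \<and> 1 \<notin> J \<and> I \<subseteq> J \<longrightarrow> J = I)"

definition local_ring :: "'a::comm_ring_1 itself \<Rightarrow> bool" where
  "local_ring _ \<longleftrightarrow> (\<exists>!I::'a set. maximal_ideal I)"

definition ring_units :: "'a::comm_ring_1 set" where
  "ring_units = {x. x dvd 1}"

definition unit_subgroup :: "'a::comm_ring_1 set \<Rightarrow> bool" where
  "unit_subgroup K \<longleftrightarrow> K \<subseteq> ring_units \<and> 1 \<in> K \<and> (\<forall>x\<in>K. \<forall>y\<in>K. x * y \<in> K)
     \<and> (\<forall>x\<in>K. \<exists>y\<in>K. x * y = 1)"

text \<open>A scheme on V is given by its set of basis relations.\<close>
definition is_scheme :: "'a set \<Rightarrow> ('a \<times> 'a) set set \<Rightarrow> bool" where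
  "is_scheme V S \<longleftrightarrow> finite V \<and>
     (\<forall>B\<in>S. B \<noteq> {} \<and> B \<subseteq> V \<times> V) \<and> \<Union>S = V \<times> V \<and>
     (\<forall>B1\<in>S. \<forall>B2\<in>S. B1 \<noteq> B2 \<longrightarrow> B1 \<inter> B2 = {}) \<and>
     (\<forall>B\<in>S. converse B \<in> S) \<and>
     (\<exists>T\<subseteq>S. \<Union>T = Id_on V) \<and>
     (\<forall>B1\<in>S. \<forall>B2\<in>S. \<forall>B\<in>S. \<forall>x z x' z'. (x, z) \<in> B \<longrightarrow> (x', z') \<in> B \<longrightarrow>
        card {y\<in>V. (x, y) \<in> B1 \<and> (y, z) \<in> B2} = card {y\<in>V. (x', y) \<in> B1 \<and> (y, z') \<in> B2})"

definition is_rel :: "('a \<times> 'a) set set \<Rightarrow> ('a \<times> 'a) set \<Rightarrow> bool" where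
  "is_rel S X \<longleftrightarrow> (\<exists>T\<subseteq>S. X = \<Union>T)"

definition trivial_scheme :: "('a \<times> 'a) set set \<Rightarrow> bool" where
  "trivial_scheme S \<longleftrightarrow> (\<forall>B\<in>S. \<exists>p. B = {p})"

definition is_coherent_closure ::
    "'a set \<Rightarrow> ('a \<times> 'a) set set \<Rightarrow> ('a \<times> 'a) set set \<Rightarrow> ('a \<times> 'a) set set \<Rightarrow> bool" where
  "is_coherent_closure V C M S \<longleftrightarrow>
     is_scheme V S \<and> (\<forall>X. is_rel C X \<longrightarrow> is_rel S X) \<and> (\<forall>X\<in>M. is_rel S X) \<and>
     (\<forall>S'. is_scheme V S' \<and> (\<forall>X. is_rel C X \<longrightarrow> is_rel S' X) \<and> (\<forall>X\<in>M. is_rel S' X)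
        \<longrightarrow> (\<forall>X. is_rel S X \<longrightarrow> is_rel S' X))"

definition coherent_closure ::
    "'a set \<Rightarrow> ('a \<times> 'a) set set \<Rightarrow> ('a \<times> 'a) set set \<Rightarrow> ('a \<times> 'a) set set" where
  "coherent_closure V C M = (THE S. is_coherent_closure V C M S)"

definition restrict_scheme :: "('a \<times> 'a) set set \<Rightarrow> 'a set \<Rightarrow> ('a \<times> 'a) set set" where
  "restrict_scheme S U = {B \<inter> (U \<times> U) | B. B \<in> S \<and> B \<inter> (U \<times> U) \<noteq> {}}"

definition pair_image :: "('a \<Rightarrow> 'a) \<Rightarrow> ('a \<times> 'a) set \<Rightarrow> ('a \<times> 'a) set" where
  "pair_image f X = (\<lambda>(x, y). (f x, f y)) ` X"

text \<open>C^G: scheme whose relations are the G-invariant relations of C; its basis relations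
  are the minimal nonempty G-invariant relations of C.\<close>
definition invariant_scheme :: "('a \<times> 'a) set set \<Rightarrow> ('a \<Rightarrow> 'a) set \<Rightarrow> ('a \<times> 'a) set set" where
  "invariant_scheme S G = {X. is_rel S X \<and> X \<noteq> {} \<and> (\<forall>g\<in>G. pair_image g X = X) \<and>
      (\<forall>Y. is_rel S Y \<and> Y \<noteq> {} \<and> Y \<subseteq> X \<and> (\<forall>g\<in>G. pair_image g Y = Y) \<longrightarrow> Y = X)}"

definition Aut :: "'a set \<Rightarrow> ('a \<times> 'a) set set \<Rightarrow> ('a \<Rightarrow> 'a) set" where
  "Aut V S = {f. bij_betw f V V \<and> (\<forall>B\<in>S. pair_image f B = B)}"

definition Cyc :: "'a::comm_ring_1 set \<Rightarrow> ('a \<times> 'a) set set" where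
  "Cyc K = {{(x, y). y - x \<in> (\<lambda>k. r * k) ` K} | r. True}"

definition right_mult_group :: "('a::comm_ring_1 \<Rightarrow> 'a) set" where
  "right_mult_group = {(\<lambda>x. x * a) | a. a \<in> ring_units}"

text \<open>C' = ((C_u)_{R^x})^{R^x_right} with u = 0.\<close>
definition Cyc_prime :: "'a::{comm_ring_1,finite} set \<Rightarrow> ('a \<times> 'a) set set" where
  "Cyc_prime K = invariant_scheme
      (restrict_scheme (coherent_closure UNIV (Cyc K) {{(0, 0)}}) ring_units) right_mult_group"

text \<open>Basic sets X of A(K,R): the basis relation {(g, xg)} of C' corresponds to X = {x. (1,x) \<in> B}.\<close>
definition mult_sring_basic_sets :: "'a::{comm_ring_1,finite} set \<Rightarrow> 'a set set" where
  "mult_sring_basic_sets K = {{x. (1, x) \<in> B} | B. B \<in> Cyc_prime K}"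

definition mult_sring_trivial :: "'a::{comm_ring_1,finite} set \<Rightarrow> bool" where
  "mult_sring_trivial K \<longleftrightarrow> (\<forall>X\<in>mult_sring_basic_sets K. \<exists>x. X = {x})"

definition Gamma_affine :: "'a::comm_ring_1 set \<Rightarrow> ('a \<Rightarrow> 'a) set" where
  "Gamma_affine K = {(\<lambda>x. a * x + b) | a b. a \<in> K}"

end

theory Submission
  imports Defs
begin

(*
  Let S be any extension of C = Cyc(K,R) in which 0 and 1 are points, i.e. in which {(0,0)} and
  {(1,1)} are relations. Triviality of A(K,R) says that every unit x is the only unit in the 1-row
  of some relation Y of C_0. The diagonal over the 1-row of Y and the diagonal over the 0-row of
  the C-relation "q - p is a unit" are relations of S, and their intersection is {(x,x)}.
  Pulling S back along the automorphism y -> s*y + t of C (s a unit) gives: if t and t + s are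
  points of S, then so is s*x + t for every unit x. Taking (t, s) = (0, 1) makes every unit a
  point, and (t, s) = (1, -1) every nonunit y, because 1 - y is a unit of the local ring R.
  So {(y,y)} is a relation of C_{0,1} for every y; then a basis relation B containing (x,z)
  contains the relation {(x,x)} O B O {(z,z)} = {(x,z)}, hence equals it.

  An automorphism f of C, composed with the element y -> (f 1 - f 0)^-1 * (y - f 0) of
  Gamma(K,R), fixes 0 and 1. So it fixes every relation of C_{0,1}, in particular every point,
  and f is affine.
*)

section \<open>Schemes and their relations\<close>

definition intersection_number :: "('a \<times> 'a) set \<Rightarrow> ('a \<times> 'a) set \<Rightarrow> 'a \<times> 'a \<Rightarrow> nat" where
  "intersection_number X Y p = card {y. (fst p, y) \<in> X \<and> (y, snd p) \<in> Y}"

definition basis_rel :: "('a \<times> 'a) set set \<Rightarrow> 'a \<times> 'a \<Rightarrow> ('a \<times> 'a) set" where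
  "basis_rel S p = (THE B. B \<in> S \<and> p \<in> B)"

lemma is_schemeD:
  assumes "is_scheme V S"
  shows "\<forall>B\<in>S. B \<noteq> {} \<and> B \<subseteq> V \<times> V" "\<Union>S = V \<times> V"
    "\<forall>B1\<in>S. \<forall>B2\<in>S. B1 \<noteq> B2 \<longrightarrow> B1 \<inter> B2 = {}" "\<forall>B\<in>S. converse B \<in> S"
    "\<exists>T\<subseteq>S. \<Union>T = Id_on V"
    "\<forall>B1\<in>S. \<forall>B2\<in>S. \<forall>B\<in>S. \<forall>x z x' z'. (x, z) \<in> B \<longrightarrow> (x', z') \<in> B \<longrightarrow>
        card {y\<in>V. (x, y) \<in> B1 \<and> (y, z) \<in> B2} = card {y\<in>V. (x', y) \<in> B1 \<and> (y, z') \<in> B2}"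
proof -
  note S = assms[unfolded is_scheme_def]
  from S show "\<forall>B\<in>S. B \<noteq> {} \<and> B \<subseteq> V \<times> V" by (elim conjE) assumption
  from S show "\<Union>S = V \<times> V" by (elim conjE) assumption
  from S show "\<forall>B1\<in>S. \<forall>B2\<in>S. B1 \<noteq> B2 \<longrightarrow> B1 \<inter> B2 = {}" by (elim conjE) assumption
  from S show "\<forall>B\<in>S. converse B \<in> S" by (elim conjE) assumption
  from S show "\<exists>T\<subseteq>S. \<Union>T = Id_on V" by (elim conjE) assumption
  from S show "\<forall>B1\<in>S. \<forall>B2\<in>S. \<forall>B\<in>S. \<forall>x z x' z'. (x, z) \<in> B \<longrightarrow> (x', z') \<in> B \<longrightarrow>
      card {y\<in>V. (x, y) \<in> B1 \<and> (y, z) \<in> B2} = card {y\<in>V. (x', y) \<in> B1 \<and> (y, z') \<in> B2}"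
    by (elim conjE) assumption
qed

lemma is_schemeI:
  fixes S :: "('a::finite \<times> 'a) set set"
  assumes "\<And>B. B \<in> S \<Longrightarrow> B \<noteq> {}" "\<Union>S = UNIV"
    "\<And>B1 B2. B1 \<in> S \<Longrightarrow> B2 \<in> S \<Longrightarrow> B1 \<noteq> B2 \<Longrightarrow> B1 \<inter> B2 = {}"
    "\<And>B. B \<in> S \<Longrightarrow> converse B \<in> S" "is_rel S Id"
    "\<And>B1 B2 B p q. B1 \<in> S \<Longrightarrow> B2 \<in> S \<Longrightarrow> B \<in> S \<Longrightarrow> p \<in> B \<Longrightarrow> q \<in> B \<Longrightarrow>
      intersection_number B1 B2 p = intersection_number B1 B2 q"
  shows "is_scheme UNIV S"
  unfolding is_scheme_def
proof (intro conjI)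
  show "finite (UNIV :: 'a set)" by simp
  show "\<forall>B\<in>S. B \<noteq> {} \<and> B \<subseteq> UNIV \<times> UNIV" using assms(1) by auto
  show "\<Union>S = UNIV \<times> UNIV" using assms(2) by simp
  show "\<forall>B1\<in>S. \<forall>B2\<in>S. B1 \<noteq> B2 \<longrightarrow> B1 \<inter> B2 = {}" using assms(3) by blast
  show "\<forall>B\<in>S. converse B \<in> S" using assms(4) by blast
  have "Id_on UNIV = Id" by auto
  then show "\<exists>T\<subseteq>S. \<Union>T = Id_on UNIV" using assms(5) unfolding is_rel_def by metis
  show "\<forall>B1\<in>S. \<forall>B2\<in>S. \<forall>B\<in>S. \<forall>x z x' z'. (x, z) \<in> B \<longrightarrow> (x', z') \<in> B \<longrightarrow>
      card {y\<in>UNIV. (x, y) \<in> B1 \<and> (y, z) \<in> B2} = card {y\<in>UNIV. (x', y) \<in> B1 \<and> (y, z') \<in> B2}"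
  proof (intro ballI allI impI)
    fix B1 B2 B x z x' z'
    assume "B1 \<in> S" "B2 \<in> S" "B \<in> S" "(x, z) \<in> B" "(x', z') \<in> B"
    then have "intersection_number B1 B2 (x, z) = intersection_number B1 B2 (x', z')"
      by (rule assms(6))
    then show "card {y\<in>UNIV. (x, y) \<in> B1 \<and> (y, z) \<in> B2} = card {y\<in>UNIV. (x', y) \<in> B1 \<and> (y, z') \<in> B2}"
      unfolding intersection_number_def by simp
  qed
qed

lemma
  assumes "is_scheme UNIV S"
  shows scheme_basis_nonempty: "B \<in> S \<Longrightarrow> B \<noteq> {}"
    and scheme_covers: "\<exists>B\<in>S. p \<in> B"
    and scheme_basis_unique: "B1 \<in> S \<Longrightarrow> B2 \<in> S \<Longrightarrow> p \<in> B1 \<Longrightarrow> p \<in> B2 \<Longrightarrow> B1 = B2"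
    and scheme_converse: "B \<in> S \<Longrightarrow> converse B \<in> S"
    and scheme_rel_Id: "is_rel S Id"
proof -
  note S = is_schemeD[OF assms]
  show "B \<in> S \<Longrightarrow> B \<noteq> {}" using S(1) by blast
  have "p \<in> \<Union>S" using S(2) by simp
  then show "\<exists>B\<in>S. p \<in> B" by blast
  show "B1 \<in> S \<Longrightarrow> B2 \<in> S \<Longrightarrow> p \<in> B1 \<Longrightarrow> p \<in> B2 \<Longrightarrow> B1 = B2" using S(3) by blast
  show "B \<in> S \<Longrightarrow> converse B \<in> S" using S(4) by blast
  have "Id_on UNIV = Id" by auto
  then show "is_rel S Id" using S(5) unfolding is_rel_def by metis
qed

lemma scheme_intersection_number:
  assumes "is_scheme UNIV S" "B1 \<in> S" "B2 \<in> S" "B \<in> S" "p \<in> B" "q \<in> B"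
  shows "intersection_number B1 B2 p = intersection_number B1 B2 q"
proof -
  obtain x z x' z' where pq: "p = (x, z)" "q = (x', z')" by fastforce
  have "card {y\<in>UNIV. (x, y) \<in> B1 \<and> (y, z) \<in> B2} = card {y\<in>UNIV. (x', y) \<in> B1 \<and> (y, z') \<in> B2}"
    using is_schemeD(6)[OF assms(1)] assms(2-6) pq by blast
  then show ?thesis unfolding intersection_number_def pq by simp
qed

lemma
  assumes "is_scheme UNIV S"
  shows basis_rel_in: "basis_rel S p \<in> S"
    and basis_rel_mem: "p \<in> basis_rel S p"
proof -
  obtain B where B: "B \<in> S" "p \<in> B" using scheme_covers[OF assms] by blast
  have "basis_rel S p = B"
    unfolding basis_rel_def by (rule the_equality) (use B scheme_basis_unique[OF assms] in blast)+
  with B show "basis_rel S p \<in> S" "p \<in> basis_rel S p" by simp_all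
qed

lemma basis_rel_eq: "is_scheme UNIV S \<Longrightarrow> B \<in> S \<Longrightarrow> p \<in> B \<Longrightarrow> basis_rel S p = B"
  using basis_rel_in basis_rel_mem scheme_basis_unique by metis

lemma basis_rel_eq_if_mem: "is_scheme UNIV S \<Longrightarrow> q \<in> basis_rel S p \<Longrightarrow> basis_rel S q = basis_rel S p"
  using basis_rel_eq basis_rel_in by metis

lemma is_rel_iff_basis_rel_subset:
  assumes S: "is_scheme UNIV S"
  shows "is_rel S X \<longleftrightarrow> (\<forall>p\<in>X. basis_rel S p \<subseteq> X)"
proof
  assume "is_rel S X"
  then obtain T where "T \<subseteq> S" "X = \<Union>T" unfolding is_rel_def by auto
  then show "\<forall>p\<in>X. basis_rel S p \<subseteq> X" using basis_rel_eq[OF S] by blast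
next
  assume "\<forall>p\<in>X. basis_rel S p \<subseteq> X"
  then have "X = \<Union>(basis_rel S ` X)" using basis_rel_mem[OF S] by blast
  moreover have "basis_rel S ` X \<subseteq> S" using basis_rel_in[OF S] by blast
  ultimately show "is_rel S X" unfolding is_rel_def by blast
qed

lemma is_rel_basis: "B \<in> S \<Longrightarrow> is_rel S B"
  unfolding is_rel_def by blast

lemma basis_rel_converse:
  assumes S: "is_scheme UNIV S"
  shows "basis_rel S (prod.swap p) = converse (basis_rel S p)"
  using basis_rel_eq[OF S scheme_converse[OF S basis_rel_in[OF S]]] basis_rel_mem[OF S, of p]
  by (cases p) auto

lemma intersection_number_Union:
  fixes S :: "('a::finite \<times> 'a) set set"
  assumes S: "is_scheme UNIV S" and T: "T1 \<subseteq> S" "T2 \<subseteq> S"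
  shows "intersection_number (\<Union>T1) (\<Union>T2) p =
           (\<Sum>(B1, B2) \<in> T1 \<times> T2. intersection_number B1 B2 p)"
proof -
  define paths :: "('a \<times> 'a) set \<times> ('a \<times> 'a) set \<Rightarrow> 'a set"
    where "paths B = {y. (fst p, y) \<in> fst B \<and> (y, snd p) \<in> snd B}" for B
  have disjoint: "paths A \<inter> paths B = {}" if "A \<in> T1 \<times> T2" "B \<in> T1 \<times> T2" "A \<noteq> B" for A B
  proof (rule ccontr)
    assume "paths A \<inter> paths B \<noteq> {}"
    then obtain y where "(fst p, y) \<in> fst A" "(fst p, y) \<in> fst B" "(y, snd p) \<in> snd A" "(y, snd p) \<in> snd B"
      unfolding paths_def by blast
    moreover have "fst A \<in> S" "fst B \<in> S" "snd A \<in> S" "snd B \<in> S" using that T by auto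
    ultimately have "fst A = fst B" "snd A = snd B" using scheme_basis_unique[OF S] by metis+
    then show False using \<open>A \<noteq> B\<close> by (simp add: prod_eq_iff)
  qed
  have "{y. (fst p, y) \<in> \<Union>T1 \<and> (y, snd p) \<in> \<Union>T2} = \<Union>(paths ` (T1 \<times> T2))"
    unfolding paths_def by auto
  moreover have "card (\<Union>(paths ` (T1 \<times> T2))) = (\<Sum>B \<in> T1 \<times> T2. card (paths B))"
    using disjoint by (intro card_UN_disjoint) auto
  ultimately show ?thesis
    unfolding intersection_number_def paths_def by (simp add: case_prod_beta)
qed

lemma intersection_number_rel_const:
  fixes S :: "('a::finite \<times> 'a) set set"
  assumes S: "is_scheme UNIV S" and "is_rel S X" "is_rel S Y" and q: "q \<in> basis_rel S p"
  shows "intersection_number X Y q = intersection_number X Y p"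
proof -
  obtain T1 T2 where T: "T1 \<subseteq> S" "X = \<Union>T1" "T2 \<subseteq> S" "Y = \<Union>T2"
    using assms unfolding is_rel_def by metis
  have "intersection_number B1 B2 q = intersection_number B1 B2 p" if "B1 \<in> T1" "B2 \<in> T2" for B1 B2
    using scheme_intersection_number[OF S _ _ basis_rel_in[OF S] q basis_rel_mem[OF S]] that T by blast
  then show ?thesis
    unfolding T(2,4) intersection_number_Union[OF S T(1,3)] by (intro sum.cong) auto
qed

context
  fixes S :: "('a::finite \<times> 'a) set set"
  assumes S: "is_scheme UNIV S"
begin

lemma is_rel_UNIV: "is_rel S UNIV"
  unfolding is_rel_iff_basis_rel_subset[OF S] by simp

lemma is_rel_Compl:
  assumes "is_rel S X" shows "is_rel S (- X)"
  unfolding is_rel_iff_basis_rel_subset[OF S]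
proof (intro ballI subsetI)
  fix p q assume p: "p \<in> - X" and q: "q \<in> basis_rel S p"
  show "q \<in> - X"
  proof
    assume "q \<in> X"
    then have "basis_rel S q \<subseteq> X" using assms is_rel_iff_basis_rel_subset[OF S] by blast
    then show False using p basis_rel_eq_if_mem[OF S q] basis_rel_mem[OF S, of p] by blast
  qed
qed

lemma is_rel_Int: "is_rel S X \<Longrightarrow> is_rel S Y \<Longrightarrow> is_rel S (X \<inter> Y)"
  unfolding is_rel_iff_basis_rel_subset[OF S] by blast

lemma is_rel_converse:
  assumes "is_rel S X" shows "is_rel S (converse X)"
  unfolding is_rel_iff_basis_rel_subset[OF S]
proof
  fix p assume "p \<in> converse X"
  then have "basis_rel S (prod.swap p) \<subseteq> X"
    using assms is_rel_iff_basis_rel_subset[OF S] by (cases p) auto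
  then show "basis_rel S p \<subseteq> converse X"
    unfolding basis_rel_converse[OF S] by auto
qed

lemma is_rel_intersection_number_eq:
  assumes "is_rel S X" "is_rel S Y" shows "is_rel S {p. intersection_number X Y p = c}"
  unfolding is_rel_iff_basis_rel_subset[OF S]
  using intersection_number_rel_const[OF S assms] by auto

end

section \<open>Coherent algebras and the coherent closure\<close>

text \<open>The relations of a scheme form a coherent algebra, and the atoms of a coherent algebra are
  the basis relations of a scheme. This is what makes coherent closures exist: the relations
  shared by all extensions form a coherent algebra.\<close>

definition coherent_algebra :: "('a \<times> 'a) set set \<Rightarrow> bool" where
  "coherent_algebra W \<longleftrightarrow> UNIV \<in> W \<and> Id \<in> W \<and> (\<forall>X\<in>W. - X \<in> W) \<and> (\<forall>X\<in>W. \<forall>Y\<in>W. X \<inter> Y \<in> W)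
     \<and> (\<forall>X\<in>W. converse X \<in> W) \<and> (\<forall>X\<in>W. \<forall>Y\<in>W. \<forall>c. {p. intersection_number X Y p = c} \<in> W)"

lemma
  assumes "coherent_algebra W"
  shows coherent_algebra_UNIV: "UNIV \<in> W"
    and coherent_algebra_Id: "Id \<in> W"
    and coherent_algebra_Compl: "X \<in> W \<Longrightarrow> - X \<in> W"
    and coherent_algebra_Int: "X \<in> W \<Longrightarrow> Y \<in> W \<Longrightarrow> X \<inter> Y \<in> W"
    and coherent_algebra_converse: "X \<in> W \<Longrightarrow> converse X \<in> W"
    and coherent_algebra_intersection_number_eq:
      "X \<in> W \<Longrightarrow> Y \<in> W \<Longrightarrow> {p. intersection_number X Y p = c} \<in> W"
  using assms unfolding coherent_algebra_def by simp_all

lemma coherent_algebraI: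
  assumes "UNIV \<in> W" "Id \<in> W" "\<And>X. X \<in> W \<Longrightarrow> - X \<in> W"
    "\<And>X Y. X \<in> W \<Longrightarrow> Y \<in> W \<Longrightarrow> X \<inter> Y \<in> W" "\<And>X. X \<in> W \<Longrightarrow> converse X \<in> W"
    "\<And>X Y c. X \<in> W \<Longrightarrow> Y \<in> W \<Longrightarrow> {p. intersection_number X Y p = c} \<in> W"
  shows "coherent_algebra W"
  using assms unfolding coherent_algebra_def by simp

lemma coherent_algebra_rels_of_scheme:
  fixes S :: "('a::finite \<times> 'a) set set"
  assumes "is_scheme UNIV S"
  shows "coherent_algebra {X. is_rel S X}"
  using is_rel_UNIV[OF assms] scheme_rel_Id[OF assms] is_rel_Compl[OF assms] is_rel_Int[OF assms]
    is_rel_converse[OF assms] is_rel_intersection_number_eq[OF assms]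
  by (intro coherent_algebraI) simp_all

definition atom :: "('a \<times> 'a) set set \<Rightarrow> 'a \<times> 'a \<Rightarrow> ('a \<times> 'a) set" where
  "atom W p = \<Inter>{X\<in>W. p \<in> X}"

context
  fixes W :: "('a::finite \<times> 'a) set set"
  assumes W: "coherent_algebra W"
begin

lemma coherent_algebra_Inter: "F \<subseteq> W \<Longrightarrow> \<Inter>F \<in> W"
proof (induction F rule: infinite_finite_induct)
  case (infinite F)
  then show ?case by simp
next
  case empty
  then show ?case using coherent_algebra_UNIV[OF W] by simp
next
  case (insert X F)
  then show ?case using coherent_algebra_Int[OF W] by simp
qed

lemma coherent_algebra_Union:
  assumes "F \<subseteq> W" shows "\<Union>F \<in> W"
proof -
  have "uminus ` F \<subseteq> W" using assms coherent_algebra_Compl[OF W] by blast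
  then have "- \<Inter>(uminus ` F) \<in> W" by (intro coherent_algebra_Compl[OF W] coherent_algebra_Inter)
  then show ?thesis by (simp add: uminus_Inf)
qed

lemma atom_in: "atom W p \<in> W"
  unfolding atom_def by (rule coherent_algebra_Inter) auto

lemma atom_mem: "p \<in> atom W p"
  unfolding atom_def by auto

lemma atom_subset: "X \<in> W \<Longrightarrow> p \<in> X \<Longrightarrow> atom W p \<subseteq> X"
  unfolding atom_def by auto

lemma atom_eq_if_mem:
  assumes q: "q \<in> atom W p" shows "atom W q = atom W p"
proof
  show "atom W q \<subseteq> atom W p" using atom_subset[OF atom_in q] .
  have D: "atom W p - atom W q \<in> W"
    unfolding Diff_eq by (intro coherent_algebra_Int[OF W] coherent_algebra_Compl[OF W] atom_in)
  have "p \<notin> atom W p - atom W q"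
  proof
    assume "p \<in> atom W p - atom W q"
    then have "q \<in> atom W p - atom W q" using atom_subset[OF D] q by blast
    then show False using atom_mem[of q] by blast
  qed
  then show "atom W p \<subseteq> atom W q" using atom_subset[OF atom_in] atom_mem[of p] by blast
qed

lemma is_rel_atoms_iff: "is_rel (range (atom W)) X \<longleftrightarrow> X \<in> W"
proof
  assume "is_rel (range (atom W)) X"
  then obtain T where T: "T \<subseteq> range (atom W)" "X = \<Union>T" unfolding is_rel_def by auto
  then have "T \<subseteq> W" using atom_in by blast
  then show "X \<in> W" using coherent_algebra_Union T(2) by simp
next
  assume X: "X \<in> W"
  have "X = \<Union>(atom W ` X)"
  proof
    show "X \<subseteq> \<Union>(atom W ` X)" using atom_mem by blast
    show "\<Union>(atom W ` X) \<subseteq> X" using atom_subset[OF X] by blast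
  qed
  moreover have "atom W ` X \<subseteq> range (atom W)" by blast
  ultimately show "is_rel (range (atom W)) X" unfolding is_rel_def by blast
qed

lemma is_scheme_atoms: "is_scheme UNIV (range (atom W))"
proof (rule is_schemeI)
  show "B \<noteq> {}" if "B \<in> range (atom W)" for B
    using that atom_mem by auto
  show "\<Union>(range (atom W)) = UNIV"
    using atom_mem by (auto intro: UN_I)
  show "B1 \<inter> B2 = {}" if B: "B1 \<in> range (atom W)" "B2 \<in> range (atom W)" "B1 \<noteq> B2" for B1 B2
  proof (rule ccontr)
    assume "B1 \<inter> B2 \<noteq> {}"
    then obtain q where "q \<in> B1" "q \<in> B2" by blast
    moreover obtain p1 p2 where "B1 = atom W p1" "B2 = atom W p2" using B(1,2) by blast
    ultimately show False using B(3) atom_eq_if_mem by metis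
  qed
  show "converse B \<in> range (atom W)" if "B \<in> range (atom W)" for B
  proof -
    from that obtain p where p: "B = atom W p" by blast
    have conv_atom: "converse (atom W q) \<in> W" for q
      by (intro coherent_algebra_converse[OF W] atom_in)
    have "atom W (prod.swap p) \<subseteq> converse B"
      using atom_subset[OF conv_atom] atom_mem p by (cases p) auto
    moreover have "B \<subseteq> converse (atom W (prod.swap p))"
      using atom_subset[OF conv_atom] atom_mem p by (cases p) auto
    ultimately have "converse B = atom W (prod.swap p)" by auto
    then show ?thesis by simp
  qed
  show "is_rel (range (atom W)) Id"
    unfolding is_rel_atoms_iff by (rule coherent_algebra_Id[OF W])
  show "intersection_number B1 B2 p = intersection_number B1 B2 q"
    if B: "B1 \<in> range (atom W)" "B2 \<in> range (atom W)" "B \<in> range (atom W)" "p \<in> B" "q \<in> B"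
    for B1 B2 B p q
  proof -
    have "{r. intersection_number B1 B2 r = intersection_number B1 B2 p} \<in> W"
      using B(1,2) atom_in by (intro coherent_algebra_intersection_number_eq[OF W]) auto
    moreover obtain r where "B = atom W r" using B(3) by blast
    then have "B = atom W p" using atom_eq_if_mem B(4) by simp
    ultimately show ?thesis using atom_subset B(5) by fastforce
  qed
qed

end

lemma coherent_algebra_scheme:
  fixes W :: "('a::finite \<times> 'a) set set"
  assumes "coherent_algebra W"
  shows "\<exists>S. is_scheme UNIV S \<and> (\<forall>X. is_rel S X \<longleftrightarrow> X \<in> W)"
  using is_scheme_atoms[OF assms] is_rel_atoms_iff[OF assms] by blast

lemma scheme_eq_if_same_rels:
  fixes S1 :: "('a::finite \<times> 'a) set set"
  assumes S1: "is_scheme UNIV S1" and S2: "is_scheme UNIV S2"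
    and rels: "\<And>X. is_rel S1 X \<longleftrightarrow> is_rel S2 X"
  shows "S1 = S2"
proof -
  have "B \<in> S'" if S: "is_scheme UNIV S" "is_scheme UNIV S'" and rels': "\<And>X. is_rel S X \<longleftrightarrow> is_rel S' X"
    and B: "B \<in> S" for S S' :: "('a \<times> 'a) set set" and B
  proof -
    obtain p where p: "p \<in> B" using scheme_basis_nonempty[OF S(1) B] by blast
    have "basis_rel S' p \<subseteq> B"
      using rels' is_rel_basis[OF B] p is_rel_iff_basis_rel_subset[OF S(2)] by blast
    moreover have "B \<subseteq> basis_rel S' p"
      using rels' is_rel_basis[OF basis_rel_in[OF S(2)]] basis_rel_eq[OF S(1) B p]
        is_rel_iff_basis_rel_subset[OF S(1)] basis_rel_mem[OF S(2)] by blast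
    ultimately show ?thesis using basis_rel_in[OF S(2), of p] by simp
  qed
  then show ?thesis using S1 S2 rels by blast
qed

definition is_extension ::
    "('a \<times> 'a) set set \<Rightarrow> ('a \<times> 'a) set set \<Rightarrow> ('a \<times> 'a) set set \<Rightarrow> bool" where
  "is_extension C M S \<longleftrightarrow> is_scheme UNIV S \<and> (\<forall>X. is_rel C X \<longrightarrow> is_rel S X) \<and> (\<forall>X\<in>M. is_rel S X)"

lemma is_coherent_closure_iff:
  "is_coherent_closure UNIV C M S \<longleftrightarrow>
     is_extension C M S \<and> (\<forall>S'. is_extension C M S' \<longrightarrow> (\<forall>X. is_rel S X \<longrightarrow> is_rel S' X))"
  unfolding is_coherent_closure_def is_extension_def by (simp only: conj_assoc)

lemma
  assumes "is_extension C M S"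
  shows is_extension_scheme: "is_scheme UNIV S"
    and is_extension_rel: "is_rel C X \<Longrightarrow> is_rel S X"
    and is_extension_mem: "X \<in> M \<Longrightarrow> is_rel S X"
  using assms unfolding is_extension_def by simp_all

lemma is_extension_subset: "is_extension C M S \<Longrightarrow> M' \<subseteq> M \<Longrightarrow> is_extension C M' S"
  unfolding is_extension_def by blast

lemma is_coherent_closure_coherent_closure:
  fixes C :: "('a::finite \<times> 'a) set set"
  shows "is_coherent_closure UNIV C M (coherent_closure UNIV C M)"
proof -
  define W where "W = {X. \<forall>S. is_extension C M S \<longrightarrow> is_rel S X}"
  have "coherent_algebra W"
  proof (rule coherent_algebraI)
    show "UNIV \<in> W" unfolding W_def using is_rel_UNIV is_extension_scheme by blast
    show "Id \<in> W" unfolding W_def using scheme_rel_Id is_extension_scheme by blast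
    show "- X \<in> W" if "X \<in> W" for X
      using that unfolding W_def using is_rel_Compl is_extension_scheme by blast
    show "X \<inter> Y \<in> W" if "X \<in> W" "Y \<in> W" for X Y
      using that unfolding W_def using is_rel_Int is_extension_scheme by blast
    show "converse X \<in> W" if "X \<in> W" for X
      using that unfolding W_def using is_rel_converse is_extension_scheme by blast
    show "{p. intersection_number X Y p = c} \<in> W" if "X \<in> W" "Y \<in> W" for X Y c
      using that unfolding W_def using is_rel_intersection_number_eq is_extension_scheme by blast
  qed
  then obtain S where S: "is_scheme UNIV S" "\<And>X. is_rel S X \<longleftrightarrow> X \<in> W"
    using coherent_algebra_scheme by blast
  have "is_extension C M S"
    unfolding is_extension_def using S unfolding W_def is_extension_def by auto
  moreover have "is_rel S' X" if "is_extension C M S'" "is_rel S X" for S' X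
    using that S(2) unfolding W_def by blast
  ultimately have closure: "is_coherent_closure UNIV C M S"
    unfolding is_coherent_closure_iff by blast
  have "S' = S" if S': "is_coherent_closure UNIV C M S'" for S'
  proof (rule scheme_eq_if_same_rels)
    show "is_scheme UNIV S'" "is_scheme UNIV S"
      using S' closure is_extension_scheme unfolding is_coherent_closure_iff by blast+
    show "is_rel S' X \<longleftrightarrow> is_rel S X" for X
      using S' closure unfolding is_coherent_closure_iff by blast
  qed
  with closure show ?thesis
    unfolding coherent_closure_def by (rule theI)
qed

lemma is_extension_coherent_closure:
  fixes C :: "('a::finite \<times> 'a) set set"
  shows "is_extension C M (coherent_closure UNIV C M)"
  using is_coherent_closure_coherent_closure unfolding is_coherent_closure_iff by blast

lemma coherent_closure_least:
  fixes C :: "('a::finite \<times> 'a) set set"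
  assumes "is_extension C M S" "is_rel (coherent_closure UNIV C M) X"
  shows "is_rel S X"
  using is_coherent_closure_coherent_closure assms unfolding is_coherent_closure_iff by blast

section \<open>Points and trivial schemes\<close>

lemma relcomp_eq_intersection_number:
  fixes X :: "('a::finite \<times> 'a) set"
  shows "X O Y = - {p. intersection_number X Y p = 0}"
  unfolding intersection_number_def by (auto simp: relcomp_unfold)

lemma is_rel_relcomp:
  fixes S :: "('a::finite \<times> 'a) set set"
  assumes "is_scheme UNIV S" "is_rel S X" "is_rel S Y"
  shows "is_rel S (X O Y)"
  unfolding relcomp_eq_intersection_number
  by (intro is_rel_Compl is_rel_intersection_number_eq assms)

lemma singleton_in_scheme:
  assumes S: "is_scheme UNIV S" and "is_rel S {p}"
  shows "{p} \<in> S"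
proof -
  have "basis_rel S p \<subseteq> {p}"
    using assms(2) by (simp add: is_rel_iff_basis_rel_subset[OF S])
  then have "basis_rel S p = {p}" using basis_rel_mem[OF S, of p] by blast
  then show ?thesis using basis_rel_in[OF S, of p] by simp
qed

lemma is_rel_singleton_if_trivial:
  assumes S: "is_scheme UNIV S" and "trivial_scheme S"
  shows "is_rel S {p}"
proof -
  obtain q where "basis_rel S p = {q}"
    using assms basis_rel_in[OF S] unfolding trivial_scheme_def by blast
  then have "basis_rel S p = {p}" using basis_rel_mem[OF S, of p] by simp
  then show ?thesis using is_rel_basis[OF basis_rel_in[OF S]] by metis
qed

lemma trivial_schemeI:
  fixes S :: "('a::finite \<times> 'a) set set"
  assumes S: "is_scheme UNIV S" and diagonal: "\<And>x. is_rel S {(x, x)}"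
  shows "trivial_scheme S"
  unfolding trivial_scheme_def
proof
  fix B assume B: "B \<in> S"
  then obtain x z where xz: "(x, z) \<in> B" using scheme_basis_nonempty[OF S] by fast
  have "is_rel S ({(x, x)} O B O {(z, z)})"
    by (intro is_rel_relcomp[OF S] diagonal is_rel_basis[OF B])
  moreover have "{(x, x)} O B O {(z, z)} = {(x, z)}" using xz by auto
  ultimately have "{(x, z)} \<in> S" using singleton_in_scheme[OF S] by simp
  then have "B = {(x, z)}" using scheme_basis_unique[OF S B _ xz] by simp
  then show "\<exists>p. B = {p}" by blast
qed

lemma is_rel_Id_on_neighbours:
  fixes S :: "('a::finite \<times> 'a) set set"
  assumes S: "is_scheme UNIV S" and "is_rel S {(a, a)}" "is_rel S X"
  shows "is_rel S (Id_on {y. (a, y) \<in> X})"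
proof -
  \<comment> \<open>R is the row of X at a; the diagonal part of R\<inverse> O R is the diagonal over that row.\<close>
  define R where "R = {(a, a)} O X"
  have "is_rel S R" unfolding R_def by (rule is_rel_relcomp[OF assms])
  then have "is_rel S (Id \<inter> (converse R O R))"
    by (intro is_rel_Int[OF S] scheme_rel_Id[OF S] is_rel_relcomp[OF S] is_rel_converse[OF S])
  moreover have "Id \<inter> (converse R O R) = Id_on {y. (a, y) \<in> X}"
    unfolding R_def by blast
  ultimately show ?thesis by simp
qed

section \<open>Transport along bijections\<close>

lemma pair_image_eq_map_prod: "pair_image f X = map_prod f f ` X"
  unfolding pair_image_def map_prod_def by simp

lemma pair_image_singleton [simp]: "pair_image f {(x, y)} = {(f x, f y)}"
  unfolding pair_image_def by simp

lemma pair_image_converse: "pair_image f (converse X) = converse (pair_image f X)"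
  unfolding pair_image_def by auto

lemma pair_image_Union: "pair_image f (\<Union>T) = \<Union>(pair_image f ` T)"
  by (simp add: pair_image_eq_map_prod image_Union)

lemma is_rel_pair_image:
  assumes "\<forall>B\<in>S. pair_image f B \<in> S" "is_rel S X"
  shows "is_rel S (pair_image f X)"
proof -
  obtain T where T: "T \<subseteq> S" "X = \<Union>T" using assms(2) unfolding is_rel_def by auto
  then have "pair_image f ` T \<subseteq> S" using assms(1) by blast
  then show ?thesis unfolding is_rel_def T(2) pair_image_Union by blast
qed

lemma pair_image_comp: "pair_image (g \<circ> f) X = pair_image g (pair_image f X)"
  unfolding pair_image_def image_image by (simp add: case_prod_beta)

context
  fixes h :: "'a \<Rightarrow> 'a"
  assumes h: "bij h"
begin

lemma bij_map_prod_self: "bij (map_prod h h)"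
  using bij_betw_map_prod[OF h h] by simp

lemma mem_pair_image_iff: "(h x, h y) \<in> pair_image h X \<longleftrightarrow> (x, y) \<in> X"
  using bij_is_inj[OF h] unfolding pair_image_def by (auto dest: injD)

lemma surj_pairE:
  obtains x z where "p = (h x, h z)"
  using bij_is_surj[OF h] by (metis prod.collapse surjD)

lemma pair_image_eqI:
  assumes "\<And>x y. (h x, h y) \<in> Y \<longleftrightarrow> (x, y) \<in> X"
  shows "pair_image h X = Y"
proof (rule set_eqI)
  fix p
  obtain x z where p: "p = (h x, h z)" by (rule surj_pairE)
  show "p \<in> pair_image h X \<longleftrightarrow> p \<in> Y" unfolding p mem_pair_image_iff assms ..
qed

lemma pair_image_Compl: "pair_image h (- X) = - pair_image h X"
  unfolding pair_image_eq_map_prod using bij_image_Compl_eq[OF bij_map_prod_self] .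

lemma pair_image_Int: "pair_image h (X \<inter> Y) = pair_image h X \<inter> pair_image h Y"
  unfolding pair_image_eq_map_prod using image_Int[OF bij_is_inj[OF bij_map_prod_self]] .

lemma pair_image_Diff: "pair_image h (X - Y) = pair_image h X - pair_image h Y"
  unfolding Diff_eq pair_image_Int pair_image_Compl ..

lemma pair_image_UNIV: "pair_image h UNIV = UNIV"
  unfolding pair_image_eq_map_prod using bij_is_surj[OF bij_map_prod_self] .

lemma pair_image_Id: "pair_image h Id = Id"
proof
  show "pair_image h Id \<subseteq> Id" unfolding pair_image_def by auto
  show "Id \<subseteq> pair_image h Id"
  proof
    fix p :: "'a \<times> 'a" assume "p \<in> Id"
    then obtain x where "p = (h x, h x)" using bij_is_surj[OF h] by (metis IdE surjD)
    then show "p \<in> pair_image h Id" unfolding pair_image_def by auto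
  qed
qed

lemma intersection_number_pair_image:
  "intersection_number (pair_image h X) (pair_image h Y) (h x, h z) = intersection_number X Y (x, z)"
proof -
  have "{y. (h x, y) \<in> pair_image h X \<and> (y, h z) \<in> pair_image h Y} = h ` {y. (x, y) \<in> X \<and> (y, z) \<in> Y}"
  proof
    show "h ` {y. (x, y) \<in> X \<and> (y, z) \<in> Y} \<subseteq> {y. (h x, y) \<in> pair_image h X \<and> (y, h z) \<in> pair_image h Y}"
      using mem_pair_image_iff by auto
    show "{y. (h x, y) \<in> pair_image h X \<and> (y, h z) \<in> pair_image h Y} \<subseteq> h ` {y. (x, y) \<in> X \<and> (y, z) \<in> Y}"
    proof
      fix y assume y: "y \<in> {y. (h x, y) \<in> pair_image h X \<and> (y, h z) \<in> pair_image h Y}"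
      obtain y' where "y = h y'" using bij_is_surj[OF h] by (metis surjD)
      then show "y \<in> h ` {y. (x, y) \<in> X \<and> (y, z) \<in> Y}" using y mem_pair_image_iff by auto
    qed
  qed
  then show ?thesis
    unfolding intersection_number_def using card_image[OF inj_on_subset[OF bij_is_inj[OF h]]] by simp
qed

lemma pair_image_intersection_number_eq:
  "pair_image h {p. intersection_number X Y p = c} =
     {p. intersection_number (pair_image h X) (pair_image h Y) p = c}"
proof (rule set_eqI)
  fix p
  obtain x z where p: "p = (h x, h z)" by (rule surj_pairE)
  show "p \<in> pair_image h {p. intersection_number X Y p = c} \<longleftrightarrow>
      p \<in> {p. intersection_number (pair_image h X) (pair_image h Y) p = c}"
    unfolding p mem_pair_image_iff by (simp add: intersection_number_pair_image)
qed

lemma coherent_algebra_vimage_pair_image: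
  assumes W: "coherent_algebra W"
  shows "coherent_algebra {X. pair_image h X \<in> W}"
  by (rule coherent_algebraI)
    (simp_all add: pair_image_UNIV pair_image_Id pair_image_Compl pair_image_Int pair_image_converse
      pair_image_intersection_number_eq coherent_algebra_UNIV[OF W] coherent_algebra_Id[OF W]
      coherent_algebra_Compl[OF W] coherent_algebra_Int[OF W] coherent_algebra_converse[OF W]
      coherent_algebra_intersection_number_eq[OF W])

lemma coherent_algebra_pair_image_fixed: "coherent_algebra {X. pair_image h X = X}"
  by (rule coherent_algebraI)
    (simp_all add: pair_image_UNIV pair_image_Id pair_image_Compl pair_image_Int pair_image_converse
      pair_image_intersection_number_eq)

end

lemma pair_image_fixes_rel:
  assumes "\<forall>B\<in>S. pair_image g B = B" "is_rel S X"
  shows "pair_image g X = X"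
proof -
  obtain T where T: "T \<subseteq> S" "X = \<Union>T" using assms(2) unfolding is_rel_def by auto
  have "pair_image g ` T = (\<lambda>B. B) ` T"
    using assms(1) T(1) by (intro image_cong) auto
  then show ?thesis unfolding T(2) pair_image_Union by simp
qed

lemma Aut_comp:
  assumes f: "f \<in> Aut V S" and g: "g \<in> Aut V S"
  shows "g \<circ> f \<in> Aut V S"
proof -
  have "bij_betw (g \<circ> f) V V"
    using f g unfolding Aut_def mem_Collect_eq by (metis bij_betw_trans)
  moreover have "pair_image (g \<circ> f) B = B" if "B \<in> S" for B
    using that f g unfolding Aut_def mem_Collect_eq pair_image_comp by simp
  ultimately show ?thesis unfolding Aut_def by simp
qed

lemma Aut_fixes_coherent_closure_rels:
  fixes C :: "('a::finite \<times> 'a) set set"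
  assumes h: "h \<in> Aut UNIV C" and M: "\<forall>X\<in>M. pair_image h X = X"
    and X: "is_rel (coherent_closure UNIV C M) X"
  shows "pair_image h X = X"
proof -
  have "bij h" and C: "\<forall>B\<in>C. pair_image h B = B" using h unfolding Aut_def by simp_all
  obtain S where S: "is_scheme UNIV S" and rels: "\<forall>X. is_rel S X \<longleftrightarrow> X \<in> {X. pair_image h X = X}"
    using coherent_algebra_scheme[OF coherent_algebra_pair_image_fixed[OF \<open>bij h\<close>]] by blast
  have "is_extension C M S"
    unfolding is_extension_def using S rels M pair_image_fixes_rel[OF C] by simp
  then have "is_rel S X" using X by (rule coherent_closure_least)
  then show ?thesis using rels by simp
qed

section \<open>Cyclotomic schemes and affine maps\<close>

lemma ring_units_mult: "a \<in> ring_units \<Longrightarrow> b \<in> ring_units \<Longrightarrow> a * b \<in> ring_units"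
  unfolding ring_units_def using mult_dvd_mono[of a 1 b 1] by simp

lemma ring_units_right_inverse:
  fixes a :: "'a::comm_ring_1"
  assumes "a \<in> ring_units"
  obtains a' where "a * a' = 1" "a' \<in> ring_units"
proof -
  have "a dvd 1" using assms unfolding ring_units_def by simp
  then obtain a' where "1 = a * a'" by (rule dvdE)
  moreover from this have "a' dvd 1" by (metis dvd_triv_right)
  ultimately show ?thesis using that unfolding ring_units_def by simp
qed

lemma
  assumes "unit_subgroup K"
  shows unit_subgroup_one: "1 \<in> K"
    and unit_subgroup_unit: "a \<in> K \<Longrightarrow> a \<in> ring_units"
    and unit_subgroup_mult: "a \<in> K \<Longrightarrow> b \<in> K \<Longrightarrow> a * b \<in> K"
    and unit_subgroup_inverse: "a \<in> K \<Longrightarrow> \<exists>a'\<in>K. a * a' = 1"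
  using assms unfolding unit_subgroup_def by auto

lemma bij_affine:
  fixes a :: "'a::comm_ring_1"
  assumes "a \<in> ring_units"
  shows "bij (\<lambda>x. a * x + b)"
proof -
  obtain a' where a': "a * a' = 1" using assms by (rule ring_units_right_inverse)
  show ?thesis
  proof (rule o_bij)
    show "(\<lambda>y. a' * (y - b)) \<circ> (\<lambda>x. a * x + b) = id"
      using a' by (auto simp: fun_eq_iff algebra_simps mult.left_commute[of a'])
    show "(\<lambda>x. a * x + b) \<circ> (\<lambda>y. a' * (y - b)) = id"
      using a' by (auto simp: fun_eq_iff algebra_simps mult.assoc[symmetric])
  qed
qed

definition cyc_rel :: "'a::comm_ring_1 set \<Rightarrow> 'a \<Rightarrow> ('a \<times> 'a) set" where
  "cyc_rel K r = {(x, y). y - x \<in> (\<lambda>k. r * k) ` K}"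

lemma Cyc_eq_range: "Cyc K = range (cyc_rel K)"
  unfolding Cyc_def cyc_rel_def by auto

lemma pair_image_affine_cyc_rel:
  fixes a :: "'a::comm_ring_1"
  assumes a: "a \<in> ring_units"
  shows "pair_image (\<lambda>x. a * x + b) (cyc_rel K r) = cyc_rel K (a * r)"
proof (rule pair_image_eqI[OF bij_affine[OF a]])
  obtain a' where a': "a' * a = 1" using a ring_units_right_inverse mult.commute by metis
  have cancel: "a * u = a * v \<longleftrightarrow> u = v" for u v :: 'a
  proof
    assume "a * u = a * v"
    then have "a' * a * u = a' * a * v" by (simp add: mult.assoc)
    then show "u = v" using a' by simp
  qed simp
  fix x y
  have "(a * y + b) - (a * x + b) = a * (y - x)" by (simp add: algebra_simps)
  then show "(a * x + b, a * y + b) \<in> cyc_rel K (a * r) \<longleftrightarrow> (x, y) \<in> cyc_rel K r"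
    unfolding cyc_rel_def by (simp add: image_iff mult.assoc cancel)
qed

lemma cyc_rel_mult:
  assumes K: "unit_subgroup K" and c: "c \<in> K"
  shows "cyc_rel K (c * r) = cyc_rel K r"
proof -
  obtain c' where c': "c' \<in> K" "c * c' = 1" using unit_subgroup_inverse[OF K c] by blast
  have "(\<lambda>k. c * r * k) ` K = (\<lambda>k. r * k) ` K"
  proof
    show "(\<lambda>k. c * r * k) ` K \<subseteq> (\<lambda>k. r * k) ` K"
      using unit_subgroup_mult[OF K c] by (force simp: mult_ac)
    have "c * r * (c' * k) = (c * c') * (r * k)" for k by (simp add: mult_ac)
    then have "r * k = c * r * (c' * k)" for k using c'(2) by simp
    then show "(\<lambda>k. r * k) ` K \<subseteq> (\<lambda>k. c * r * k) ` K"
      using unit_subgroup_mult[OF K c'(1)] by blast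
  qed
  then show ?thesis unfolding cyc_rel_def by simp
qed

lemma is_rel_Cyc_pair_image_affine:
  fixes a :: "'a::comm_ring_1"
  assumes "a \<in> ring_units" "is_rel (Cyc K) X"
  shows "is_rel (Cyc K) (pair_image (\<lambda>x. a * x + b) X)"
  using assms(2) pair_image_affine_cyc_rel[OF assms(1)]
  by (intro is_rel_pair_image) (auto simp: Cyc_eq_range)

lemma is_rel_Cyc_unit_difference:
  assumes K: "unit_subgroup K"
  shows "is_rel (Cyc K) {(x, y). y - x \<in> ring_units}"
proof -
  have "{(x, y). y - x \<in> ring_units} = \<Union>(cyc_rel K ` ring_units)"
  proof
    show "{(x, y). y - x \<in> ring_units} \<subseteq> \<Union>(cyc_rel K ` ring_units)"
    proof
      fix p :: "'a \<times> 'a" assume "p \<in> {(x, y). y - x \<in> ring_units}"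
      moreover have "p \<in> cyc_rel K (snd p - fst p)"
        using unit_subgroup_one[OF K] unfolding cyc_rel_def by (auto intro: image_eqI[of _ _ 1])
      ultimately show "p \<in> \<Union>(cyc_rel K ` ring_units)" by auto
    qed
    show "\<Union>(cyc_rel K ` ring_units) \<subseteq> {(x, y). y - x \<in> ring_units}"
      using unit_subgroup_unit[OF K] unfolding cyc_rel_def by (auto intro!: ring_units_mult)
  qed
  moreover have "cyc_rel K ` ring_units \<subseteq> Cyc K" unfolding Cyc_eq_range by blast
  ultimately show ?thesis unfolding is_rel_def by blast
qed

lemma Gamma_affine_subset_Aut:
  assumes K: "unit_subgroup K"
  shows "Gamma_affine K \<subseteq> Aut UNIV (Cyc K)"
proof
  fix f assume "f \<in> Gamma_affine K"
  then obtain a b where a: "a \<in> K" and f: "f = (\<lambda>x. a * x + b)" unfolding Gamma_affine_def by blast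
  have a_unit: "a \<in> ring_units" by (rule unit_subgroup_unit[OF K a])
  have "pair_image f (cyc_rel K r) = cyc_rel K r" for r
    unfolding f pair_image_affine_cyc_rel[OF a_unit] by (rule cyc_rel_mult[OF K a])
  then have "\<forall>B\<in>Cyc K. pair_image f B = B" unfolding Cyc_eq_range by blast
  moreover have "bij f" unfolding f by (rule bij_affine[OF a_unit])
  ultimately show "f \<in> Aut UNIV (Cyc K)" unfolding Aut_def by simp
qed

section \<open>Finite local rings\<close>

lemma is_ideal_principal: "is_ideal {r * (c::'a::comm_ring_1) | r. True}"
  unfolding is_ideal_def
proof (intro conjI ballI allI)
  show "0 \<in> {r * c | r. True}" by (rule CollectI, rule exI[of _ 0]) simp
  fix x y assume "x \<in> {r * c | r. True}" "y \<in> {r * c | r. True}"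
  then obtain r1 r2 where "x = r1 * c" "y = r2 * c" by blast
  then have "x + y = (r1 + r2) * c" by (simp add: distrib_right)
  then show "x + y \<in> {r * c | r. True}" by blast
next
  fix x r assume "x \<in> {r * c | r. True}"
  then obtain r1 where "x = r1 * c" by blast
  then have "r * x = (r * r1) * c" by (simp add: mult.assoc)
  then show "r * x \<in> {r * c | r. True}" by blast
qed

lemma nonunit_in_maximal_ideal:
  fixes c :: "'a::{comm_ring_1,finite}"
  assumes c: "c \<notin> ring_units"
  shows "\<exists>J. maximal_ideal J \<and> c \<in> J"
proof -
  define P where "P = {J :: 'a set. is_ideal J \<and> 1 \<notin> J \<and> c \<in> J}"
  have "1 \<notin> {r * c | r. True}"
  proof
    assume "1 \<in> {r * c | r. True}"
    then obtain r where "1 = c * r" by (auto simp: mult.commute)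
    then show False using c unfolding ring_units_def by (simp add: dvdI)
  qed
  moreover have "c \<in> {r * c | r. True}" by (rule CollectI, rule exI[of _ 1]) simp
  ultimately have "{r * c | r. True} \<in> P" unfolding P_def using is_ideal_principal by blast
  moreover have "finite P" by simp
  ultimately obtain J where J: "J \<in> P" and max: "\<And>J'. J' \<in> P \<Longrightarrow> J \<subseteq> J' \<Longrightarrow> J = J'"
    using finite_has_maximal[of P] by (metis empty_iff)
  have "maximal_ideal J"
    unfolding maximal_ideal_def
  proof (intro conjI allI impI)
    show "is_ideal J" "1 \<notin> J" using J unfolding P_def by simp_all
    fix J' assume J': "is_ideal J' \<and> 1 \<notin> J' \<and> J \<subseteq> J'"
    then have "J' \<in> P" using J unfolding P_def by blast
    then show "J' = J" using max J' by blast
  qed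
  then show ?thesis using J unfolding P_def by blast
qed

lemma local_ring_one_minus_nonunit:
  fixes y :: "'a::{comm_ring_1,finite}"
  assumes L: "local_ring TYPE('a)" and y: "y \<notin> ring_units"
  shows "1 - y \<in> ring_units"
proof (rule ccontr)
  assume "1 - y \<notin> ring_units"
  then obtain J where J: "maximal_ideal J" "1 - y \<in> J" using nonunit_in_maximal_ideal by blast
  obtain J' where J': "maximal_ideal J'" "y \<in> J'" using nonunit_in_maximal_ideal[OF y] by blast
  have "J' = J" using L J(1) J'(1) unfolding local_ring_def by blast
  moreover have "\<forall>a\<in>J. \<forall>b\<in>J. a + b \<in> J" using J(1) unfolding maximal_ideal_def is_ideal_def by simp
  ultimately have "y + (1 - y) \<in> J" using J(2) J'(2) by blast
  then show False using J(1) unfolding maximal_ideal_def by simp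
qed

section \<open>Triviality of the multiplication S-ring\<close>

lemma is_rel_Diff:
  assumes disj: "\<forall>A\<in>T. \<forall>B\<in>T. A \<noteq> B \<longrightarrow> A \<inter> B = {}" and "is_rel T X" "is_rel T Y"
  shows "is_rel T (X - Y)"
proof -
  obtain T1 T2 where T: "T1 \<subseteq> T" "X = \<Union>T1" "T2 \<subseteq> T" "Y = \<Union>T2"
    using assms(2,3) unfolding is_rel_def by metis
  have "X - Y = \<Union>(T1 - T2)"
  proof
    show "X - Y \<subseteq> \<Union>(T1 - T2)"
    proof
      fix p assume p: "p \<in> X - Y"
      then obtain A where A: "A \<in> T1" "p \<in> A" using T(2) by blast
      then have "A \<notin> T2" using p T(4) by blast
      then show "p \<in> \<Union>(T1 - T2)" using A by blast
    qed
    show "\<Union>(T1 - T2) \<subseteq> X - Y"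
    proof
      fix p assume "p \<in> \<Union>(T1 - T2)"
      then obtain A where A: "A \<in> T1" "A \<notin> T2" "p \<in> A" by blast
      have "p \<notin> B" if B: "B \<in> T2" for B
      proof -
        have "A \<noteq> B" using A(2) B by blast
        then have "A \<inter> B = {}" using disj A(1) B T(1,3) by blast
        then show ?thesis using A(3) by blast
      qed
      then show "p \<in> X - Y" using A(1,3) T(2,4) by blast
    qed
  qed
  moreover have "T1 - T2 \<subseteq> T" using T(1) by blast
  ultimately show ?thesis unfolding is_rel_def by blast
qed

lemma invariant_scheme_covers:
  fixes T :: "('a::finite \<times> 'a) set set"
  assumes disj: "\<forall>A\<in>T. \<forall>B\<in>T. A \<noteq> B \<longrightarrow> A \<inter> B = {}" and G: "\<forall>g\<in>G. bij g"
    and Z: "is_rel T Z" "\<forall>g\<in>G. pair_image g Z = Z" "p \<in> Z"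
  shows "\<exists>Z'\<in>invariant_scheme T G. p \<in> Z'"
proof -
  define inv where "inv Y \<longleftrightarrow> is_rel T Y \<and> (\<forall>g\<in>G. pair_image g Y = Y)" for Y
  have "Z \<in> {Y. inv Y \<and> p \<in> Y}" using Z unfolding inv_def by simp
  moreover have "finite {Y. inv Y \<and> p \<in> Y}" by simp
  ultimately obtain Z0 where Z0: "inv Z0" "p \<in> Z0"
    and min: "\<And>Y. inv Y \<Longrightarrow> p \<in> Y \<Longrightarrow> Y \<subseteq> Z0 \<Longrightarrow> Z0 = Y"
    using finite_has_minimal[of "{Y. inv Y \<and> p \<in> Y}"] by (metis (mono_tags, lifting) empty_iff mem_Collect_eq)
  have "Z0 \<in> invariant_scheme T G"
    unfolding invariant_scheme_def mem_Collect_eq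
  proof (intro conjI allI impI)
    show "is_rel T Z0" "\<forall>g\<in>G. pair_image g Z0 = Z0" using Z0(1) unfolding inv_def by simp_all
    show "Z0 \<noteq> {}" using Z0(2) by blast
    fix Y assume "is_rel T Y \<and> Y \<noteq> {} \<and> Y \<subseteq> Z0 \<and> (\<forall>g\<in>G. pair_image g Y = Y)"
    then have Y: "inv Y" "Y \<noteq> {}" "Y \<subseteq> Z0" unfolding inv_def by simp_all
    show "Y = Z0"
    proof (cases "p \<in> Y")
      case True
      then show ?thesis using min[OF Y(1) True Y(3)] by simp
    next
      case False
      have "pair_image g (Z0 - Y) = Z0 - Y" if "g \<in> G" for g
        using Y(1) Z0(1) pair_image_Diff[of g] G that unfolding inv_def by simp
      moreover have "is_rel T (Z0 - Y)"
        using is_rel_Diff[OF disj] Y(1) Z0(1) unfolding inv_def by simp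
      ultimately have "inv (Z0 - Y)" unfolding inv_def by simp
      then have "Z0 = Z0 - Y" using min Z0(2) False by blast
      then show ?thesis using Y(2,3) by blast
    qed
  qed
  then show ?thesis using Z0(2) by blast
qed

lemma restrict_schemeE:
  assumes "A \<in> restrict_scheme S U"
  obtains B where "B \<in> S" "A = B \<inter> (U \<times> U)"
  using assms unfolding restrict_scheme_def by blast

lemma restrict_scheme_disjoint:
  assumes S: "is_scheme UNIV S"
  shows "\<forall>A\<in>restrict_scheme S U. \<forall>B\<in>restrict_scheme S U. A \<noteq> B \<longrightarrow> A \<inter> B = {}"
proof (intro ballI impI)
  fix A B assume A: "A \<in> restrict_scheme S U" and B: "B \<in> restrict_scheme S U" and "A \<noteq> B"
  obtain A' B' where A': "A' \<in> S" "A = A' \<inter> (U \<times> U)" and B': "B' \<in> S" "B = B' \<inter> (U \<times> U)"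
    using A B by (metis restrict_schemeE)
  then have "A' \<noteq> B'" using \<open>A \<noteq> B\<close> by blast
  then have "A' \<inter> B' = {}" using scheme_basis_unique[OF S A'(1) B'(1)] by blast
  then show "A \<inter> B = {}" using A'(2) B'(2) by blast
qed

lemma is_rel_restrict_scheme_square:
  assumes S: "is_scheme UNIV S"
  shows "is_rel (restrict_scheme S U) (U \<times> U)"
proof -
  have "U \<times> U = \<Union>(restrict_scheme S U)"
  proof
    show "U \<times> U \<subseteq> \<Union>(restrict_scheme S U)"
    proof
      fix p assume p: "p \<in> U \<times> U"
      then have "p \<in> basis_rel S p \<inter> (U \<times> U)" using basis_rel_mem[OF S] by blast
      moreover from this have "basis_rel S p \<inter> (U \<times> U) \<in> restrict_scheme S U"
        unfolding restrict_scheme_def using basis_rel_in[OF S] by blast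
      ultimately show "p \<in> \<Union>(restrict_scheme S U)" by blast
    qed
    show "\<Union>(restrict_scheme S U) \<subseteq> U \<times> U" by (blast elim: restrict_schemeE)
  qed
  then show ?thesis unfolding is_rel_def by blast
qed

lemma is_rel_restrict_scheme_lift:
  assumes "is_rel (restrict_scheme S U) Z"
  shows "\<exists>Y. is_rel S Y \<and> Z = Y \<inter> (U \<times> U)"
proof -
  obtain T where T: "T \<subseteq> restrict_scheme S U" "Z = \<Union>T" using assms unfolding is_rel_def by auto
  define Y where "Y = \<Union>{B\<in>S. B \<inter> (U \<times> U) \<in> T}"
  have "{B\<in>S. B \<inter> (U \<times> U) \<in> T} \<subseteq> S" by blast
  then have "is_rel S Y" unfolding Y_def is_rel_def by blast
  moreover have "Z = Y \<inter> (U \<times> U)"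
  proof
    show "Z \<subseteq> Y \<inter> (U \<times> U)"
    proof
      fix p assume "p \<in> Z"
      then obtain A where A: "A \<in> T" "p \<in> A" using T(2) by blast
      then obtain B where "B \<in> S" "A = B \<inter> (U \<times> U)" using T(1) by (blast elim: restrict_schemeE)
      then show "p \<in> Y \<inter> (U \<times> U)" unfolding Y_def using A by blast
    qed
    show "Y \<inter> (U \<times> U) \<subseteq> Z" using T(2) unfolding Y_def by blast
  qed
  ultimately show ?thesis by blast
qed

lemma right_mult_group_bij: "g \<in> right_mult_group \<Longrightarrow> bij g"
  unfolding right_mult_group_def using bij_affine[where b = 0] by (auto simp: mult.commute)

lemma right_mult_group_fixes_units:
  assumes g: "g \<in> right_mult_group"
  shows "pair_image g (ring_units \<times> ring_units) = ring_units \<times> ring_units"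
proof -
  obtain a where a: "a \<in> ring_units" and g_def: "g = (\<lambda>x. x * a)"
    using g unfolding right_mult_group_def by blast
  obtain a' where a': "a * a' = 1" "a' \<in> ring_units" using a by (rule ring_units_right_inverse)
  have "x * a \<in> ring_units \<longleftrightarrow> x \<in> ring_units" for x
  proof
    assume "x * a \<in> ring_units"
    then have "x * a * a' \<in> ring_units" using a' ring_units_mult by blast
    then show "x \<in> ring_units" using a' by (simp add: mult.assoc)
  qed (use a ring_units_mult in blast)
  then show ?thesis unfolding g_def by (intro pair_image_eqI[OF right_mult_group_bij[OF g, unfolded g_def]]) simp
qed

lemma mult_sring_trivial_isolates_units:
  fixes K :: "'a::{comm_ring_1,finite} set"
  assumes T: "mult_sring_trivial K" and x: "x \<in> ring_units"
  shows "\<exists>Y. is_rel (coherent_closure UNIV (Cyc K) {{(0, 0)}}) Y \<and> {y \<in> ring_units. (1, y) \<in> Y} = {x}"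
proof -
  define C0 where "C0 = coherent_closure UNIV (Cyc K) {{(0, 0)}}"
  have S0: "is_scheme UNIV C0" unfolding C0_def by (rule is_extension_scheme[OF is_extension_coherent_closure])
  define R0 where "R0 = restrict_scheme C0 ring_units"
  have one: "1 \<in> ring_units" unfolding ring_units_def by simp
  have "\<forall>g\<in>right_mult_group. bij g" using right_mult_group_bij by blast
  moreover have "\<forall>g\<in>right_mult_group. pair_image g (ring_units \<times> ring_units) = ring_units \<times> ring_units"
    using right_mult_group_fixes_units by blast
  moreover have "(1, x) \<in> ring_units \<times> ring_units" using one x by blast
  ultimately obtain Z where Z: "Z \<in> invariant_scheme R0 right_mult_group" "(1, x) \<in> Z"
    using invariant_scheme_covers[OF restrict_scheme_disjoint[OF S0] _ is_rel_restrict_scheme_square[OF S0]]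
    unfolding R0_def by blast
  have "Z \<in> Cyc_prime K" using Z(1) unfolding Cyc_prime_def R0_def C0_def .
  then have "{y. (1, y) \<in> Z} \<in> mult_sring_basic_sets K"
    unfolding mult_sring_basic_sets_def by blast
  then obtain z where "{y. (1, y) \<in> Z} = {z}" using T unfolding mult_sring_trivial_def by blast
  moreover from this have "z = x" using Z(2) by (metis mem_Collect_eq singletonD)
  ultimately have Z1: "{y. (1, y) \<in> Z} = {x}" by simp
  have "is_rel R0 Z" using Z(1) unfolding invariant_scheme_def by blast
  then obtain Y where Y: "is_rel C0 Y" "Z = Y \<inter> (ring_units \<times> ring_units)"
    using is_rel_restrict_scheme_lift unfolding R0_def by blast
  have "{y \<in> ring_units. (1, y) \<in> Y} = {y. (1, y) \<in> Z}" using Y(2) one by blast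
  then show ?thesis using Y(1) Z1 unfolding C0_def by blast
qed

section \<open>Points of extensions of the cyclotomic scheme\<close>

context
  fixes K :: "'a::{comm_ring_1,finite} set"
  assumes K: "unit_subgroup K" and T: "mult_sring_trivial K"
begin

lemma unit_points_of_extension:
  assumes S: "is_extension (Cyc K) {{(0, 0)}, {(1, 1)}} S" and x: "x \<in> ring_units"
  shows "is_rel S {(x, x)}"
proof -
  have S_scheme: "is_scheme UNIV S" by (rule is_extension_scheme[OF S])
  obtain Y where Y: "is_rel (coherent_closure UNIV (Cyc K) {{(0, 0)}}) Y"
    and Y_units: "{y \<in> ring_units. (1, y) \<in> Y} = {x}"
    using mult_sring_trivial_isolates_units[OF T x] by blast
  have "is_extension (Cyc K) {{(0, 0)}} S" using S by (rule is_extension_subset) blast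
  then have "is_rel S Y" using Y by (rule coherent_closure_least)
  then have "is_rel S (Id_on {y. (1, y) \<in> Y})"
    using is_extension_mem[OF S] by (intro is_rel_Id_on_neighbours[OF S_scheme]) simp_all
  moreover have "is_rel S (Id_on {y. (0, y) \<in> {(x, y). y - x \<in> ring_units}})"
    using is_extension_mem[OF S] is_extension_rel[OF S is_rel_Cyc_unit_difference[OF K]]
    by (intro is_rel_Id_on_neighbours[OF S_scheme]) simp_all
  ultimately have "is_rel S (Id_on {y. (1, y) \<in> Y} \<inter> Id_on {y. (0, y) \<in> {(x, y). y - x \<in> ring_units}})"
    by (rule is_rel_Int[OF S_scheme])
  moreover have "Id_on {y. (1, y) \<in> Y} \<inter> Id_on {y. (0, y) \<in> {(x, y). y - x \<in> ring_units}} = {(x, x)}"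
    using Y_units by auto
  ultimately show ?thesis by simp
qed

lemma affine_unit_points_of_extension:
  assumes S: "is_extension (Cyc K) {{(t, t)}, {(t + s, t + s)}} S"
    and s: "s \<in> ring_units" and x: "x \<in> ring_units"
  shows "is_rel S {(s * x + t, s * x + t)}"
proof -
  \<comment> \<open>S' is S pulled back along \<phi>: an extension of Cyc K in which 0 and 1 are points.\<close>
  define \<phi> where "\<phi> = (\<lambda>y. s * y + t)"
  have \<phi>: "bij \<phi>" unfolding \<phi>_def by (rule bij_affine[OF s])
  obtain S' where S': "is_scheme UNIV S'"
    and "\<forall>X. is_rel S' X \<longleftrightarrow> X \<in> {X. is_rel S (pair_image \<phi> X)}"
    using coherent_algebra_scheme[OF coherent_algebra_vimage_pair_image[OF \<phi>
          coherent_algebra_rels_of_scheme[OF is_extension_scheme[OF S]]]]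
    by blast
  then have rels: "is_rel S' X \<longleftrightarrow> is_rel S (pair_image \<phi> X)" for X by blast
  have "is_extension (Cyc K) {{(0, 0)}, {(1, 1)}} S'"
    unfolding is_extension_def
  proof (intro conjI allI impI ballI)
    show "is_scheme UNIV S'" by (rule S')
    fix X assume "is_rel (Cyc K) X"
    then have "is_rel (Cyc K) (pair_image \<phi> X)"
      unfolding \<phi>_def by (rule is_rel_Cyc_pair_image_affine[OF s])
    then show "is_rel S' X" unfolding rels by (rule is_extension_rel[OF S])
  next
    fix X :: "('a \<times> 'a) set" assume "X \<in> {{(0, 0)}, {(1, 1)}}"
    moreover have "pair_image \<phi> {(0, 0)} = {(t, t)}" "pair_image \<phi> {(1, 1)} = {(t + s, t + s)}"
      unfolding \<phi>_def by (simp_all add: add.commute)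
    ultimately have "pair_image \<phi> X \<in> {{(t, t)}, {(t + s, t + s)}}" by blast
    then show "is_rel S' X" unfolding rels by (rule is_extension_mem[OF S])
  qed
  then have "is_rel S' {(x, x)}" by (rule unit_points_of_extension[OF _ x])
  then show ?thesis unfolding rels \<phi>_def by simp
qed

lemma diagonal_points_coherent_closure:
  assumes L: "local_ring TYPE('a)"
  shows "is_rel (coherent_closure UNIV (Cyc K) {{(0, 0)}, {(1, 1)}}) {(y, y)}"
proof -
  let ?C = "coherent_closure UNIV (Cyc K) {{(0, 0)}, {(1, 1)}}"
  have C: "is_extension (Cyc K) {{(0, 0)}, {(1, 1)}} ?C" by (rule is_extension_coherent_closure)
  have one: "1 \<in> ring_units" unfolding ring_units_def by simp
  show ?thesis
  proof (cases "y \<in> ring_units")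
    case True
    then show ?thesis using affine_unit_points_of_extension[of 0 1 ?C y] C one by simp
  next
    case False
    then have "1 - y \<in> ring_units" by (rule local_ring_one_minus_nonunit[OF L])
    moreover have "- 1 \<in> ring_units" unfolding ring_units_def by simp
    moreover have "(1 :: 'a) + - 1 = 0" by simp
    then have "{{(1, 1)}, {(1 + - 1, 1 + - 1)}} = ({{(0, 0)}, {(1, 1)}} :: ('a \<times> 'a) set set)"
      by (simp add: insert_commute)
    ultimately show ?thesis using affine_unit_points_of_extension[of 1 "- 1" ?C "1 - y"] C by simp
  qed
qed

end

lemma Aut_Cyc_subset_Gamma_affine:
  fixes K :: "'a::{comm_ring_1,finite} set"
  assumes K: "unit_subgroup K"
    and triv: "trivial_scheme (coherent_closure UNIV (Cyc K) {{(0, 0)}, {(1, 1)}})"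
  shows "Aut UNIV (Cyc K) \<subseteq> Gamma_affine K"
proof
  fix f assume f: "f \<in> Aut UNIV (Cyc K)"
  define a where "a = f 1 - f 0"
  define b where "b = f 0"
  have "(0, 1) \<in> cyc_rel K 1"
    unfolding cyc_rel_def using unit_subgroup_one[OF K] by force
  moreover have "pair_image f (cyc_rel K 1) = cyc_rel K 1"
    using f unfolding Aut_def Cyc_eq_range by blast
  ultimately have "(f 0, f 1) \<in> cyc_rel K 1" unfolding pair_image_def by force
  then have a: "a \<in> K" unfolding cyc_rel_def a_def by auto
  obtain a' where a': "a' \<in> K" "a * a' = 1" using unit_subgroup_inverse[OF K a] by blast
  define g where "g = (\<lambda>y. a' * y + - (a' * b))"
  have "g \<in> Aut UNIV (Cyc K)"
    using Gamma_affine_subset_Aut[OF K] a'(1) unfolding g_def Gamma_affine_def by blast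
  then have h: "g \<circ> f \<in> Aut UNIV (Cyc K)" using f by (rule Aut_comp[rotated])
  have "(g \<circ> f) 0 = 0" "(g \<circ> f) 1 = 1"
    using a'(2) unfolding g_def a_def b_def by (simp_all add: algebra_simps mult.commute)
  then have fixes_0_1: "\<forall>X\<in>{{(0, 0)}, {(1, 1)}}. pair_image (g \<circ> f) X = X" by simp
  have "(g \<circ> f) y = y" for y
  proof -
    have "is_rel (coherent_closure UNIV (Cyc K) {{(0, 0)}, {(1, 1)}}) {(y, y)}"
      using is_rel_singleton_if_trivial[OF is_extension_scheme[OF is_extension_coherent_closure] triv] .
    then have "pair_image (g \<circ> f) {(y, y)} = {(y, y)}"
      by (rule Aut_fixes_coherent_closure_rels[OF h fixes_0_1])
    then show ?thesis by simp
  qed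
  then have inverse: "a' * (f y - b) = y" for y unfolding g_def by (simp add: algebra_simps)
  have "f y = a * y + b" for y
  proof -
    have "f y - b = a * (a' * (f y - b))" using a'(2) by (simp add: mult.assoc[symmetric])
    then show ?thesis unfolding inverse by (simp add: algebra_simps)
  qed
  then show "f \<in> Gamma_affine K" unfolding Gamma_affine_def using a by blast
qed

theorem theorem4p4:
  fixes K :: "'a::{comm_ring_1,finite} set"
  assumes "local_ring TYPE('a)"
    and "unit_subgroup K"
    and "mult_sring_trivial K"
  shows "trivial_scheme (coherent_closure UNIV (Cyc K) {{(0, 0)}, {(1, 1)}})
         \<and> Aut UNIV (Cyc K) = Gamma_affine K"
proof
  show triv: "trivial_scheme (coherent_closure UNIV (Cyc K) {{(0, 0)}, {(1, 1)}})"
    using trivial_schemeI[OF is_extension_scheme[OF is_extension_coherent_closure]]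
      diagonal_points_coherent_closure[OF assms(2,3,1)] .
  show "Aut UNIV (Cyc K) = Gamma_affine K"
    using Aut_Cyc_subset_Gamma_affine[OF assms(2) triv] Gamma_affine_subset_Aut[OF assms(2)] by (rule subset_antisym)
qed

end
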